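(* For every positive integer $m$ there is a sentence $\varphi_m\in\mathrm{FO}^2_m[<]$ over the alphabet $\Sigma_m$ that separates $K_m$ and $L_m$.
   Context: Let $\Sigma_m=\{a_0,\dots,a_{m-1}\}$. For positive integers $i,n$ define words: $u_{1,n}=a_0$, $v_{1,n}=\varepsilon$ (empty word); $u_{2,n}=a_0(a_1a_0)^{2n}$, $v_{2,n}=(a_1a_0)^{2n}$; $u_{2i+1,n}=(a_0a_1\cdots a_{2i})^n\,u_{2i,n}$, $v_{2i+1,n}=(a_0a_1\cdots a_{2i})^n\,v_{2i,n}$; $u_{2i+2,n}=u_{2i+1,n}\,(a_{2i+1}a_{2i}\cdots a_0)^n$, $v_{2i+2,n}=v_{2i+1,n}\,(a_{2i+1}a_{2i}\cdots a_0)^n$. Let $K_m=\{u_{m,n}:n\ge1\}$ and $L_m=\{v_{m,n}:n\ge1\}$. Words are finite structures with universe $\{1,\dots,|w|\}$, unary predicates $Q_a$ marking positions carrying $a$, and the order $<$. $\mathrm{FO}^2_n[<]$ is first-order logic over this signature using only the variables $x,y$ with quantifier depth at most $n$; $\mathrm{FO}^2_{m,n}[<]$ is the set of its formulas in which every path in the parse tree has at most $m$ blocks of alternating quantifiers; $\mathrm{FO}^2_m[<]=\bigcup_{n\ge m}\mathrm{FO}^2_{m,n}[<]$. A formula $\varphi$ separates $K,L$ if every word of $K$ satisfies $\varphi$ and no word of $L$ does, or vice versa. *)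

theory Defs
  imports Main
begin

text \<open>Letters a_i of the alphabet are represented by natural numbers i;
  Sigma_m = {0,...,m-1}. Words are lists of letters.\<close>

datatype var = VX | VY

datatype fo2 =
    FTrue
  | FFalse
  | Letter nat var
  | Less var var
  | Eq var var
  | Neg fo2
  | And fo2 fo2
  | Or fo2 fo2
  | Ex var fo2
  | All var fo2

text \<open>Semantics: universe {1..|w|}; position i carries letter w!(i-1).\<close>
fun sat :: "nat list \<Rightarrow> (var \<Rightarrow> nat) \<Rightarrow> fo2 \<Rightarrow> bool" where
  "sat w s FTrue = True"
| "sat w s FFalse = False"
| "sat w s (Letter a v) = (w ! (s v - 1) = a)"
| "sat w s (Less u v) = (s u < s v)"
| "sat w s (Eq u v) = (s u = s v)"
| "sat w s (Neg \<phi>) = (\<not> sat w s \<phi>)"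
| "sat w s (And \<phi> \<psi>) = (sat w s \<phi> \<and> sat w s \<psi>)"
| "sat w s (Or \<phi> \<psi>) = (sat w s \<phi> \<or> sat w s \<psi>)"
| "sat w s (Ex v \<phi>) = (\<exists>i\<in>{1..length w}. sat w (s(v := i)) \<phi>)"
| "sat w s (All v \<phi>) = (\<forall>i\<in>{1..length w}. sat w (s(v := i)) \<phi>)"

fun freev :: "fo2 \<Rightarrow> var set" where
  "freev FTrue = {}"
| "freev FFalse = {}"
| "freev (Letter a v) = {v}"
| "freev (Less u v) = {u, v}"
| "freev (Eq u v) = {u, v}"
| "freev (Neg \<phi>) = freev \<phi>"
| "freev (And \<phi> \<psi>) = freev \<phi> \<union> freev \<psi>"
| "freev (Or \<phi> \<psi>) = freev \<phi> \<union> freev \<psi>"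
| "freev (Ex v \<phi>) = freev \<phi> - {v}"
| "freev (All v \<phi>) = freev \<phi> - {v}"

definition sentence :: "fo2 \<Rightarrow> bool" where
  "sentence \<phi> \<longleftrightarrow> freev \<phi> = {}"

text \<open>A sentence is true in a word (its truth is independent of the assignment).\<close>
definition models :: "nat list \<Rightarrow> fo2 \<Rightarrow> bool" where
  "models w \<phi> \<longleftrightarrow> sat w (\<lambda>_. 0) \<phi>"

fun letters :: "fo2 \<Rightarrow> nat set" where
  "letters (Letter a v) = {a}"
| "letters (Neg \<phi>) = letters \<phi>"
| "letters (And \<phi> \<psi>) = letters \<phi> \<union> letters \<psi>"
| "letters (Or \<phi> \<psi>) = letters \<phi> \<union> letters \<psi>"
| "letters (Ex v \<phi>) = letters \<phi>"
| "letters (All v \<phi>) = letters \<phi>"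
| "letters _ = {}"

definition over_alphabet :: "nat \<Rightarrow> fo2 \<Rightarrow> bool" where
  "over_alphabet m \<phi> \<longleftrightarrow> letters \<phi> \<subseteq> {..<m}"

fun qdepth :: "fo2 \<Rightarrow> nat" where
  "qdepth (Neg \<phi>) = qdepth \<phi>"
| "qdepth (And \<phi> \<psi>) = max (qdepth \<phi>) (qdepth \<psi>)"
| "qdepth (Or \<phi> \<psi>) = max (qdepth \<phi>) (qdepth \<psi>)"
| "qdepth (Ex v \<phi>) = Suc (qdepth \<phi>)"
| "qdepth (All v \<phi>) = Suc (qdepth \<phi>)"
| "qdepth _ = 0"

text \<open>Maximal number of blocks of alternating quantifiers along a path of the
  parse tree. Negations are taken into account by polarity (equivalently:
  counted on the negation normal form). Arguments: current polarity
  (True = positive), the effective type of the last quantifier seen on the path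
  (None, Some True = existential, Some False = universal).\<close>
fun nblocks :: "bool \<Rightarrow> bool option \<Rightarrow> fo2 \<Rightarrow> nat" where
  "nblocks p l (Neg \<phi>) = nblocks (\<not> p) l \<phi>"
| "nblocks p l (And \<phi> \<psi>) = max (nblocks p l \<phi>) (nblocks p l \<psi>)"
| "nblocks p l (Or \<phi> \<psi>) = max (nblocks p l \<phi>) (nblocks p l \<psi>)"
| "nblocks p l (Ex v \<phi>) =
     (if l = Some p then 0 else 1) + nblocks p (Some p) \<phi>"
| "nblocks p l (All v \<phi>) =
     (if l = Some (\<not> p) then 0 else 1) + nblocks p (Some (\<not> p)) \<phi>"
| "nblocks p l _ = 0"

definition blocks :: "fo2 \<Rightarrow> nat" where
  "blocks \<phi> = nblocks True None \<phi>"

definition FO2_mn :: "nat \<Rightarrow> nat \<Rightarrow> fo2 set" where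
  "FO2_mn m n = {\<phi>. qdepth \<phi> \<le> n \<and> blocks \<phi> \<le> m}"

definition FO2_m :: "nat \<Rightarrow> fo2 set" where
  "FO2_m m = (\<Union>n\<in>{m..}. FO2_mn m n)"

definition separates :: "fo2 \<Rightarrow> nat list set \<Rightarrow> nat list set \<Rightarrow> bool" where
  "separates \<phi> K L \<longleftrightarrow>
     ((\<forall>w\<in>K. models w \<phi>) \<and> (\<forall>w\<in>L. \<not> models w \<phi>)) \<or>
     ((\<forall>w\<in>L. models w \<phi>) \<and> (\<forall>w\<in>K. \<not> models w \<phi>))"

fun uw :: "nat \<Rightarrow> nat \<Rightarrow> nat list" where
  "uw 0 n = []"
| "uw (Suc 0) n = [0]"
| "uw (Suc (Suc 0)) n = 0 # concat (replicate (2 * n) [1, 0])"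
| "uw (Suc (Suc (Suc k))) n =
     (if odd (Suc (Suc (Suc k)))
      then concat (replicate n [0..<Suc (Suc (Suc k))]) @ uw (Suc (Suc k)) n
      else uw (Suc (Suc k)) n @ concat (replicate n (rev [0..<Suc (Suc (Suc k))])))"

fun vw :: "nat \<Rightarrow> nat \<Rightarrow> nat list" where
  "vw 0 n = []"
| "vw (Suc 0) n = []"
| "vw (Suc (Suc 0)) n = concat (replicate (2 * n) [1, 0])"
| "vw (Suc (Suc (Suc k))) n =
     (if odd (Suc (Suc (Suc k)))
      then concat (replicate n [0..<Suc (Suc (Suc k))]) @ vw (Suc (Suc k)) n
      else vw (Suc (Suc k)) n @ concat (replicate n (rev [0..<Suc (Suc (Suc k))])))"

definition KK :: "nat \<Rightarrow> nat list set" where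
  "KK m = {uw m n | n. n \<ge> 1}"

definition LL :: "nat \<Rightarrow> nat list set" where
  "LL m = {vw m n | n. n \<ge> 1}"

end

theory Submission
  imports Defs
begin

text \<open>Write R_k for the layer of u_{m,n} (or v_{m,n}) that is the occurrence of u_{k,n}
  (or v_{k,n}) inside it. For even k the word u_{k+1,n} is u_{k,n} preceded by a block
  ending with a_k, and a_k does not occur in u_{k,n}; hence R_k consists of the positions of
  R_{k+1} lying after the last a_k of R_{k+1}. Symmetrically, for odd k, R_k consists of the
  positions of R_{k+1} before its first a_k. Starting from R_m, the whole word, each step
  costs one quantifier and one alternation and reuses the same two variables, so R_1 is
  defined in FO^2 by a formula with m - 1 alternating blocks. The sentence "some position of R_1 carries a_0" then holds
  in u_{m,n}, where R_1 is the single letter a_0, and fails in v_{m,n}, where R_1 is empty.\<close>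

fun other :: "var \<Rightarrow> var" where
  "other VX = VY"
| "other VY = VX"

lemma other_neq [simp]: "other v \<noteq> v" "v \<noteq> other v"
  by (cases v; simp)+

definition past_last :: "nat \<Rightarrow> (var \<Rightarrow> fo2) \<Rightarrow> var \<Rightarrow> fo2" where
  "past_last c R v =
     And (R v) (All (other v) (Or (Or (Less (other v) v) (Neg (Letter c (other v))))
                                  (Neg (R (other v)))))"

definition before_first :: "nat \<Rightarrow> (var \<Rightarrow> fo2) \<Rightarrow> var \<Rightarrow> fo2" where
  "before_first c R v =
     And (R v) (All (other v) (Or (Or (Less v (other v)) (Neg (Letter c (other v))))
                                  (Neg (R (other v)))))"

fun region :: "nat \<Rightarrow> nat \<Rightarrow> var \<Rightarrow> fo2" where
  "region 0 k v = FTrue"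
| "region (Suc d) k v =
     (if even k then past_last k (region d (Suc k)) v else before_first k (region d (Suc k)) v)"

definition separator :: "nat \<Rightarrow> fo2" where
  "separator m = Ex VY (And (Letter 0 VY) (region (m - 1) 1 VY))"

lemma freev_region: "freev (region d k v) \<subseteq> {v}"
proof (induction d arbitrary: k v)
  case (Suc d)
  then have "freev (region d (Suc k) v) \<subseteq> {v}" "freev (region d (Suc k) (other v)) \<subseteq> {other v}"
    by blast+
  then show ?case by (auto simp: past_last_def before_first_def)
qed simp

lemma letters_region: "letters (region d k v) \<subseteq> {k..<k + d}"
proof (induction d arbitrary: k v)
  case (Suc d)
  then have "letters (region d (Suc k) v) \<subseteq> {Suc k..<Suc k + d}"
    "letters (region d (Suc k) (other v)) \<subseteq> {Suc k..<Suc k + d}"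
    by blast+
  then show ?case by (auto simp: past_last_def before_first_def)
qed simp

text \<open>The blocks of region d k start with a universal one, so they cost one block less
  after a universal quantifier; l = Some (\<not> p) records exactly that situation.\<close>

lemma nblocks_region: "nblocks p l (region d k v) \<le> (if l = Some (\<not> p) then d - 1 else d)"
proof (induction d arbitrary: p l k v)
  case (Suc d)
  have "nblocks (\<not> p) (Some (\<not> p)) (region d (Suc k) (other v)) \<le> d"
    using Suc.IH[of "\<not> p" "Some (\<not> p)"] by simp
  moreover have "nblocks p l (region d (Suc k) v) \<le> (if l = Some (\<not> p) then d - 1 else d)"
    by (rule Suc.IH)
  ultimately show ?case
    by (auto simp: past_last_def before_first_def)
qed simp

text \<open>Positions are 1-based, so the occurrence of M in A @ M @ B occupies
  {length A<..length A + length M}.\<close>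

definition marks :: "nat list \<Rightarrow> (var \<Rightarrow> fo2) \<Rightarrow> nat set \<Rightarrow> bool" where
  "marks w R I \<longleftrightarrow> (\<forall>v s. s v \<in> {1..length w} \<longrightarrow> (sat w s (R v) \<longleftrightarrow> s v \<in> I))"

lemma marks_past_last:
  assumes "marks w R I" and "I \<subseteq> {1..length w}"
  shows "marks w (past_last c R) {x \<in> I. \<forall>i\<in>I. w ! (i - 1) = c \<longrightarrow> i < x}"
  unfolding marks_def
proof (intro allI impI)
  fix v :: var and s :: "var \<Rightarrow> nat"
  assume "s v \<in> {1..length w}"
  moreover have "sat w (s(other v := i)) (R (other v)) \<longleftrightarrow> i \<in> I" if "i \<in> {1..length w}" for i
    using assms(1) that unfolding marks_def by (metis fun_upd_same)
  ultimately show "sat w s (past_last c R v) \<longleftrightarrow> s v \<in> {x \<in> I. \<forall>i\<in>I. w ! (i - 1) = c \<longrightarrow> i < x}"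
    using assms unfolding marks_def past_last_def by auto
qed

lemma marks_before_first:
  assumes "marks w R I" and "I \<subseteq> {1..length w}"
  shows "marks w (before_first c R) {x \<in> I. \<forall>i\<in>I. w ! (i - 1) = c \<longrightarrow> x < i}"
  unfolding marks_def
proof (intro allI impI)
  fix v :: var and s :: "var \<Rightarrow> nat"
  assume "s v \<in> {1..length w}"
  moreover have "sat w (s(other v := i)) (R (other v)) \<longleftrightarrow> i \<in> I" if "i \<in> {1..length w}" for i
    using assms(1) that unfolding marks_def by (metis fun_upd_same)
  ultimately show "sat w s (before_first c R v) \<longleftrightarrow> s v \<in> {x \<in> I. \<forall>i\<in>I. w ! (i - 1) = c \<longrightarrow> x < i}"
    using assms unfolding marks_def before_first_def by auto
qed

lemma nth_factor_mem:
  assumes "i \<in> {length A<..length A + length M}"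
  shows "(A @ M @ B) ! (i - 1) \<in> set M"
proof -
  have "i - 1 = length A + (i - 1 - length A)" "i - 1 - length A < length M"
    using assms by auto
  then show ?thesis by (metis nth_append_length_plus nth_append nth_mem)
qed

lemma positions_past_last:
  assumes w: "w = A @ P @ M @ B" and P: "P \<noteq> [] \<Longrightarrow> last P = c" and M: "c \<notin> set M"
  shows "{x \<in> {length A<..length A + length (P @ M)}.
            \<forall>i\<in>{length A<..length A + length (P @ M)}. w ! (i - 1) = c \<longrightarrow> i < x}
         = {length (A @ P)<..length (A @ P) + length M}" (is "?L = ?R")
proof
  show "?L \<subseteq> ?R"
  proof
    fix x assume x: "x \<in> ?L"
    show "x \<in> ?R"
    proof (rule ccontr)
      assume "x \<notin> ?R"
      with x have "P \<noteq> []" "x \<le> length A + length P" by auto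
      moreover have "w ! (length A + length P - 1) = c"
        using \<open>P \<noteq> []\<close> P by (cases P rule: rev_cases) (auto simp: w nth_append)
      ultimately show False using x by force
    qed
  qed
next
  show "?R \<subseteq> ?L"
  proof
    fix x assume x: "x \<in> ?R"
    have "i < x" if "i \<in> {length A<..length A + length (P @ M)}" "w ! (i - 1) = c" for i
    proof (rule ccontr)
      assume "\<not> i < x"
      with that x have "i \<in> {length (A @ P)<..length (A @ P) + length M}" by auto
      then have "w ! (i - 1) \<in> set M" unfolding w using nth_factor_mem[of i "A @ P" M B] by simp
      with that M show False by simp
    qed
    with x show "x \<in> ?L" by auto
  qed
qed

lemma positions_before_first:
  assumes w: "w = A @ M @ S @ B" and S: "S \<noteq> [] \<Longrightarrow> hd S = c" and M: "c \<notin> set M"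
  shows "{x \<in> {length A<..length A + length (M @ S)}.
            \<forall>i\<in>{length A<..length A + length (M @ S)}. w ! (i - 1) = c \<longrightarrow> x < i}
         = {length A<..length A + length M}" (is "?L = ?R")
proof
  show "?L \<subseteq> ?R"
  proof
    fix x assume x: "x \<in> ?L"
    show "x \<in> ?R"
    proof (rule ccontr)
      assume "x \<notin> ?R"
      with x have "S \<noteq> []" "length A + length M < x" by auto
      moreover have "w ! (length A + length M + 1 - 1) = c"
        using \<open>S \<noteq> []\<close> S by (cases S) (auto simp: w nth_append)
      moreover have "length A + length M + 1 \<in> {length A<..length A + length (M @ S)}"
        using \<open>S \<noteq> []\<close> by (simp add: Suc_le_eq)
      ultimately show False using x by fastforce
    qed
  qed
next
  show "?R \<subseteq> ?L"
  proof
    fix x assume x: "x \<in> ?R"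
    have "x < i" if "i \<in> {length A<..length A + length (M @ S)}" "w ! (i - 1) = c" for i
    proof (rule ccontr)
      assume "\<not> x < i"
      with that x have "i \<in> {length A<..length A + length M}" by auto
      then have "w ! (i - 1) \<in> set M" unfolding w by (rule nth_factor_mem)
      with that M show False by simp
    qed
    with x show "x \<in> ?L" by auto
  qed
qed

definition layered :: "(nat \<Rightarrow> nat list) \<Rightarrow> bool" where
  "layered W \<longleftrightarrow> (\<forall>j>0. j \<notin> set (W j) \<and>
     (even j \<longrightarrow> (\<exists>P. W (Suc j) = P @ W j \<and> (P \<noteq> [] \<longrightarrow> last P = j))) \<and>
     (odd j \<longrightarrow> (\<exists>S. W (Suc j) = W j @ S \<and> (S \<noteq> [] \<longrightarrow> hd S = j))))"

lemma marks_region: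
  assumes "layered W" and "0 < k"
  shows "\<exists>A B. W (k + d) = A @ W k @ B \<and>
           marks (W (k + d)) (region d k) {length A<..length A + length (W k)}"
  using assms(2)
proof (induction d arbitrary: k)
  case 0
  show ?case by (intro exI[of _ "[]"] exI[of _ "[]"]) (auto simp: marks_def)
next
  case (Suc d)
  define w where "w = W (k + Suc d)"
  obtain A B where w: "w = A @ W (Suc k) @ B"
    and R: "marks w (region d (Suc k)) {length A<..length A + length (W (Suc k))}"
    using Suc.IH[of "Suc k"] by (auto simp: w_def)
  have I: "{length A<..length A + length (W (Suc k))} \<subseteq> {1..length w}"
    using w by auto
  have fresh: "k \<notin> set (W k)"
    using assms(1) Suc.prems unfolding layered_def by blast
  show ?case
  proof (cases "even k")
    case True
    then obtain P where P: "W (Suc k) = P @ W k" "P \<noteq> [] \<Longrightarrow> last P = k"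
      using assms(1) Suc.prems unfolding layered_def by blast
    have "region (Suc d) k = past_last k (region d (Suc k))"
      using True by (simp add: fun_eq_iff)
    then have "marks w (region (Suc d) k) {length (A @ P)<..length (A @ P) + length (W k)}"
      using marks_past_last[OF R I, of k] positions_past_last[of w A P "W k" B k] w P fresh
      by simp
    moreover have "w = (A @ P) @ W k @ B" using w P by simp
    ultimately show ?thesis unfolding w_def by blast
  next
    case False
    then obtain S where S: "W (Suc k) = W k @ S" "S \<noteq> [] \<Longrightarrow> hd S = k"
      using assms(1) Suc.prems unfolding layered_def by blast
    have "region (Suc d) k = before_first k (region d (Suc k))"
      using False by (simp add: fun_eq_iff)
    then have "marks w (region (Suc d) k) {length A<..length A + length (W k)}"
      using marks_before_first[OF R I, of k] positions_before_first[of w A "W k" S B k] w S fresh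
      by simp
    moreover have "w = A @ W k @ (S @ B)" using w S by simp
    ultimately show ?thesis unfolding w_def by blast
  qed
qed

lemma models_separator_iff:
  assumes "layered W" and "0 < m"
  shows "models (W m) (separator m) \<longleftrightarrow> 0 \<in> set (W 1)"
proof -
  obtain A B where w: "W m = A @ W 1 @ B"
    and R: "marks (W m) (region (m - 1) 1) {length A<..length A + length (W 1)}"
    using marks_region[OF assms(1), of 1 "m - 1"] assms(2) by auto
  have "models (W m) (separator m) \<longleftrightarrow>
        (\<exists>i\<in>{1..length (W m)}. W m ! (i - 1) = 0 \<and> i \<in> {length A<..length A + length (W 1)})"
    using R unfolding models_def separator_def marks_def by (auto dest: spec[of _ VY])
  also have "\<dots> \<longleftrightarrow> (\<exists>i\<in>{length A<..length A + length (W 1)}. W m ! (i - 1) = 0)"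
    using w by auto
  also have "\<dots> \<longleftrightarrow> 0 \<in> set (W 1)"
  proof
    assume "\<exists>i\<in>{length A<..length A + length (W 1)}. W m ! (i - 1) = 0"
    then show "0 \<in> set (W 1)" using nth_factor_mem w by metis
  next
    assume "0 \<in> set (W 1)"
    then obtain t where "t < length (W 1)" "W 1 ! t = 0" by (auto simp: in_set_conv_nth)
    then show "\<exists>i\<in>{length A<..length A + length (W 1)}. W m ! (i - 1) = 0"
      using w by (intro bexI[of _ "length A + t + 1"]) (auto simp: nth_append)
  qed
  finally show ?thesis .
qed

lemma last_concat_replicate: "concat (replicate r xs) \<noteq> [] \<Longrightarrow> last (concat (replicate r xs)) = last xs"
  by (induction r) (auto simp: last_append)

lemma hd_concat_replicate: "concat (replicate r xs) \<noteq> [] \<Longrightarrow> hd (concat (replicate r xs)) = hd xs"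
  by (cases r) auto

lemma layered_if_runs:
  assumes W1: "set (W 1) \<subseteq> {0}"
    and W_Suc: "\<And>j. 0 < j \<Longrightarrow> W (Suc j) =
       (if even j then concat (replicate (r j) [0..<Suc j]) @ W j
        else W j @ concat (replicate (r j) (rev [0..<Suc j])))"
  shows "layered W"
proof -
  have "set (W j) \<subseteq> {..<j}" if "0 < j" for j
    using that
  proof (induction j)
    case (Suc j)
    show ?case
    proof (cases "j = 0")
      case False
      with Suc.IH show ?thesis by (auto simp: W_Suc)
    qed (use W1 in auto)
  qed simp
  then show ?thesis
    unfolding layered_def using W_Suc
    by (auto simp: last_concat_replicate hd_concat_replicate)
qed

text \<open>u_{2,n} and v_{2,n} also arise from u_{1,n} = a_0 and v_{1,n} = \<epsilon> by appending
  (a_1 a_0)^{2n}, so both families are layered from level 1 on.\<close>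

lemma layered_uw: "layered (\<lambda>j. uw j n)"
proof (rule layered_if_runs[where r = "\<lambda>j. if j = 1 then 2 * n else n"])
  fix j :: nat assume "0 < j"
  then obtain k where "j = Suc k" by (cases j) auto
  then show "uw (Suc j) n = (if even j then concat (replicate (if j = 1 then 2 * n else n) [0..<Suc j]) @ uw j n
      else uw j n @ concat (replicate (if j = 1 then 2 * n else n) (rev [0..<Suc j])))"
    by (cases k) (simp_all add: upt_rec)
qed simp

lemma layered_vw: "layered (\<lambda>j. vw j n)"
proof (rule layered_if_runs[where r = "\<lambda>j. if j = 1 then 2 * n else n"])
  fix j :: nat assume "0 < j"
  then obtain k where "j = Suc k" by (cases j) auto
  then show "vw (Suc j) n = (if even j then concat (replicate (if j = 1 then 2 * n else n) [0..<Suc j]) @ vw j n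
      else vw j n @ concat (replicate (if j = 1 then 2 * n else n) (rev [0..<Suc j])))"
    by (cases k) (simp_all add: upt_rec)
qed simp

lemma sentence_separator: "sentence (separator m)"
  using freev_region[of "m - 1" 1 VY] unfolding sentence_def separator_def by auto

lemma over_alphabet_separator: "0 < m \<Longrightarrow> over_alphabet m (separator m)"
  using letters_region[of "m - 1" 1 VY] unfolding over_alphabet_def separator_def by auto

lemma separator_in_FO2_m:
  assumes "0 < m"
  shows "separator m \<in> FO2_m m"
proof -
  have "blocks (separator m) \<le> m"
    using nblocks_region[of True "Some True" "m - 1" 1 VY] assms
    unfolding blocks_def separator_def by simp
  then show ?thesis
    unfolding FO2_m_def FO2_mn_def by (intro UN_I[of "max m (qdepth (separator m))"]) auto
qed

theorem lemma4p9:
  fixes m :: nat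
  assumes "m \<ge> 1"
  shows "\<exists>\<phi>. sentence \<phi> \<and> over_alphabet m \<phi> \<and> \<phi> \<in> FO2_m m \<and> separates \<phi> (KK m) (LL m)"
proof (intro exI conjI)
  have "0 < m" using assms by simp
  then have "models (uw m n) (separator m)" "\<not> models (vw m n) (separator m)" for n
    using models_separator_iff[OF layered_uw] models_separator_iff[OF layered_vw] by simp_all
  then show "separates (separator m) (KK m) (LL m)"
    unfolding separates_def KK_def LL_def by blast
  show "over_alphabet m (separator m)" using \<open>0 < m\<close> by (rule over_alphabet_separator)
  show "separator m \<in> FO2_m m" using \<open>0 < m\<close> by (rule separator_in_FO2_m)
qed (rule sentence_separator)

end
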